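(* Let $\alpha\in(0,1)$, $\theta=\alpha/2$, and let $0=t_0<\cdots<t_N=T$ be a time mesh with $\tau_k=t_k-t_{k-1}$ and $r_k=\tau_k/\tau_{k-1}$. Define $\beta_k:=\frac{2(1-\alpha/2)r_k}{1+\alpha+(1-\alpha/2)r_k}$ for $k\ge2$. Then, for $n\ge2$: (i) $I^{(n)}_{n-k}>(1+\beta_{k+1})\zeta^{(n)}_{n-k}$ for $1\le k\le n-1$, and $I^{(n)}_{n-k}-(1+\beta_{k+1})\zeta^{(n)}_{n-k}<I^{(n-1)}_{n-k-1}-(1+\beta_{k+1})\zeta^{(n-1)}_{n-k-1}$ for $1\le k\le n-2$; (ii) $J^{(n)}_{n-k}>3\zeta^{(n)}_{n-k}$ for $1\le k\le n-1$, and $J^{(n)}_{n-k}-3\zeta^{(n)}_{n-k}<J^{(n-1)}_{n-k-1}-3\zeta^{(n-1)}_{n-k-1}$ for $1\le k\le n-2$; (iii) $r_n\zeta^{(n)}_1<\frac{\alpha}{3(2-\alpha)}\varpi_n'(t_{n-1})$.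
   Context: $\omega_\beta(t)=t^{\beta-1}/\Gamma(\beta)$; $t_{n-\theta}=\theta t_{n-1}+(1-\theta)t_n$; $\varpi_n'(t):=\omega_{1-\alpha}(t_{n-\theta}-t)$ and $\varpi_n''(t):=\frac{d}{dt}\varpi_n'(t)$ for $0\le t<t_{n-\theta}$. For $1\le k\le n$: $\zeta^{(n)}_{n-k}:=\frac{2}{\tau_k^2}\int_{t_{k-1}}^{t_k}\big(s-\frac{t_{k-1}+t_k}{2}\big)\varpi_n'(s)\,ds$. For $1\le k\le n-1$: $$I^{(n)}_{n-k}:=\int_{t_{k-1}}^{t_k}\frac{t_k-t}{\tau_k}\varpi_n''(t)\,dt,\qquad J^{(n)}_{n-k}:=\int_{t_{k-1}}^{t_k}\frac{t-t_{k-1}}{\tau_k}\varpi_n''(t)\,dt.$$ *)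

theory Defs
  imports "HOL-Analysis.Analysis"
begin

definition omega :: "real \<Rightarrow> real \<Rightarrow> real" where
  "omega \<beta> s = s powr (\<beta> - 1) / Gamma \<beta>"

definition tau :: "(nat \<Rightarrow> real) \<Rightarrow> nat \<Rightarrow> real" where
  "tau t k = t k - t (k - 1)"

definition ratio :: "(nat \<Rightarrow> real) \<Rightarrow> nat \<Rightarrow> real" where
  "ratio t k = tau t k / tau t (k - 1)"

definition tshift :: "(nat \<Rightarrow> real) \<Rightarrow> real \<Rightarrow> nat \<Rightarrow> real" where
  "tshift t \<theta> n = \<theta> * t (n - 1) + (1 - \<theta>) * t n"

definition varpi1 :: "(nat \<Rightarrow> real) \<Rightarrow> real \<Rightarrow> nat \<Rightarrow> real \<Rightarrow> real" where
  "varpi1 t \<alpha> n s = omega (1 - \<alpha>) (tshift t (\<alpha>/2) n - s)"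

definition varpi2 :: "(nat \<Rightarrow> real) \<Rightarrow> real \<Rightarrow> nat \<Rightarrow> real \<Rightarrow> real" where
  "varpi2 t \<alpha> n s = deriv (varpi1 t \<alpha> n) s"

(* zeta^{(n)}_{n-k} *)
definition zeta :: "(nat \<Rightarrow> real) \<Rightarrow> real \<Rightarrow> nat \<Rightarrow> nat \<Rightarrow> real" where
  "zeta t \<alpha> n k = 2 / (tau t k)^2 *
     integral {t (k - 1)..t k} (\<lambda>s. (s - (t (k - 1) + t k) / 2) * varpi1 t \<alpha> n s)"

(* I^{(n)}_{n-k} *)
definition Iint :: "(nat \<Rightarrow> real) \<Rightarrow> real \<Rightarrow> nat \<Rightarrow> nat \<Rightarrow> real" where
  "Iint t \<alpha> n k = integral {t (k - 1)..t k} (\<lambda>s. (t k - s) / tau t k * varpi2 t \<alpha> n s)"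

(* J^{(n)}_{n-k} *)
definition Jint :: "(nat \<Rightarrow> real) \<Rightarrow> real \<Rightarrow> nat \<Rightarrow> nat \<Rightarrow> real" where
  "Jint t \<alpha> n k = integral {t (k - 1)..t k} (\<lambda>s. (s - t (k - 1)) / tau t k * varpi2 t \<alpha> n s)"

definition betak :: "(nat \<Rightarrow> real) \<Rightarrow> real \<Rightarrow> nat \<Rightarrow> real" where
  "betak t \<alpha> k = 2 * (1 - \<alpha>/2) * ratio t k / (1 + \<alpha> + (1 - \<alpha>/2) * ratio t k)"

end

theory Submission
  imports Defs
begin

text \<open>On a mesh cell \<open>[p, q] = [t\<^sub>k\<^sub>-\<^sub>1, t\<^sub>k]\<close> to the left of \<open>T = t\<^sub>n\<^sub>-\<^sub>\<theta>\<close>, the kernel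
  \<open>\<varpi>\<^sub>n''\<close> is \<open>\<alpha>/\<Gamma>(1-\<alpha>) (T - s)\<^sup>-\<^sup>\<alpha>\<^sup>-\<^sup>1\<close>, and integrating by parts against
  \<open>(s - p) (q - s)\<close> expresses \<open>\<zeta>\<close> through the same weight. Hence \<open>I - (1 + \<beta>) \<zeta>\<close> and
  \<open>J - 3 \<zeta>\<close> are positive multiples of \<open>\<integral> K(s) (T - s)\<^sup>-\<^sup>\<alpha>\<^sup>-\<^sup>1 ds\<close> for explicit quadratics
  \<open>K\<close>, each changing sign once on \<open>[p, q]\<close>, at \<open>s\<^sub>0\<close> say. If the quotient of two weights
  \<open>w/v\<close> is monotone in the matching direction, then \<open>K (w - (w/v)(s\<^sub>0) v) \<ge> 0\<close>, so
  \<open>\<integral> K w \<ge> (w/v)(s\<^sub>0) \<integral> K v\<close>. For \<open>J\<close> take \<open>v = 1\<close>, against which \<open>K\<close> integrates to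
  zero; for \<open>I\<close>, after raising \<open>\<beta>\<close> to its largest admissible value, take
  \<open>v = (T - s)\<^sup>-\<^sup>2\<close> or \<open>(T - s)\<^sup>-\<^sup>3\<close>, against which the integral has a closed form that
  rational bounds for \<open>ln\<close> show to be positive. Monotonicity in \<open>n\<close>
  holds because the \<open>T\<close>-derivative of \<open>\<integral> K(s) (T - s)\<^sup>-\<^sup>\<gamma> ds\<close> is \<open>-\<gamma>\<close> times the same
  integral with exponent \<open>\<gamma> + 1\<close>, which is again positive. Part (iii) bounds the weight by
  its value at \<open>s = t\<^sub>n\<^sub>-\<^sub>1\<close>.\<close>

lemma has_integral_of_real_derivative:
  fixes F f :: "real \<Rightarrow> real"
  assumes "a \<le> b" "\<And>x. x \<in> {a..b} \<Longrightarrow> (F has_real_derivative f x) (at x)"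
  shows "(f has_integral (F b - F a)) {a..b}"
  by (rule fundamental_theorem_of_calculus[OF assms(1)])
     (meson assms(2) has_real_derivative_iff_has_vector_derivative has_vector_derivative_at_within)

lemma integral_reflect_antiderivative:
  fixes F f :: "real \<Rightarrow> real"
  assumes "p \<le> q" "q < T" "\<And>x. 0 < x \<Longrightarrow> (F has_real_derivative f x) (at x)"
  shows "integral {p..q} (\<lambda>s. f (T - s)) = F (T - p) - F (T - q)"
proof -
  have "((\<lambda>s. - F (T - s)) has_real_derivative f (T - s)) (at s)" if "s \<in> {p..q}" for s
  proof -
    have "((\<lambda>s. F (T - s)) has_real_derivative f (T - s) * (-1)) (at s)"
      using that assms(2)
      by (intro DERIV_chain2[where f = F, OF assms(3)]) (auto intro!: derivative_eq_intros)
    from DERIV_minus[OF this] show ?thesis by simp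
  qed
  from has_integral_of_real_derivative[OF assms(1) this] show ?thesis
    by (simp add: integral_unique)
qed

lemma continuous_nonneg_integral_pos:
  fixes f :: "real \<Rightarrow> real"
  assumes "continuous_on {p..q} f" "p < q" "\<And>s. s \<in> {p..q} \<Longrightarrow> 0 \<le> f s"
    and "c \<in> {p..q}" "0 < f c"
  shows "0 < integral {p..q} f"
proof -
  have "0 \<le> integral {p..q} f"
    using assms by (intro integral_nonneg integrable_continuous_interval) auto
  moreover have "integral {p..q} f \<noteq> 0"
    using integral_eq_0_iff[OF assms(1-3)] assms(4,5) by auto
  ultimately show ?thesis by simp
qed

lemma mono_on_diff_mult_diff_nonneg:
  fixes f :: "'a::linordered_idom \<Rightarrow> 'a"
  assumes "mono_on S f" "x \<in> S" "y \<in> S"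
  shows "0 \<le> (x - y) * (f x - f y)"
  using assms mono_onD[OF assms(1)]
  by (cases "x \<le> y") (auto intro: mult_nonpos_nonpos simp: not_le)

lemma integral_lincomb_continuous:
  fixes f g :: "real \<Rightarrow> real"
  assumes "continuous_on {p..q} f" "continuous_on {p..q} g"
  shows "integral {p..q} (\<lambda>s. a * f s + b * g s) = a * integral {p..q} f + b * integral {p..q} g"
proof -
  have "integral {p..q} (\<lambda>s. a * f s + b * g s) = integral {p..q} (\<lambda>s. a * f s) + integral {p..q} (\<lambda>s. b * g s)"
    using assms by (intro integral_add integrable_continuous_interval continuous_intros)
  then show ?thesis by simp
qed

lemma ln_less_rational_bound:
  fixes y :: real
  assumes "1 < y"
  shows "ln y < (y - 1) * (5 + y) / (2 + 4 * y)"
proof -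
  let ?f = "\<lambda>y. (y - 1) * (5 + y) / (2 + 4 * y) - ln y"
  have "?f 1 < ?f y"
  proof (rule DERIV_pos_imp_increasing_open[OF assms])
    fix x :: real
    assume x: "1 < x" "x < y"
    have "(?f has_real_derivative ((5 + x + (x - 1)) * (2 + 4 * x) - (x - 1) * (5 + x) * 4)
            / (2 + 4 * x)^2 - 1 / x) (at x)"
      using x by (auto intro!: derivative_eq_intros simp: power2_eq_square)
    moreover have "((5 + x + (x - 1)) * (2 + 4 * x) - (x - 1) * (5 + x) * 4) / (2 + 4 * x)^2 - 1 / x
        = 4 * (x - 1)^3 / (x * (2 + 4 * x)^2)"
      using x by (simp add: field_simps) (simp add: algebra_simps power2_eq_square power3_eq_cube)
    moreover have "0 < 4 * (x - 1)^3 / (x * (2 + 4 * x)^2)"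
      using x by simp
    ultimately show "\<exists>d. (?f has_real_derivative d) (at x) \<and> 0 < d"
      by auto
  qed (intro continuous_intros; auto)
  then show ?thesis by simp
qed

lemma ln_greater_rational_bound:
  fixes y :: real
  assumes "1 < y"
  shows "(y - 1) * (1 + 5 * y) / (2 * y * (2 + y)) < ln y"
proof -
  let ?f = "\<lambda>y. ln y - (y - 1) * (1 + 5 * y) / (2 * y * (2 + y))"
  have "?f 1 < ?f y"
  proof (rule DERIV_pos_imp_increasing_open[OF assms])
    fix x :: real
    assume x: "1 < x" "x < y"
    have "(?f has_real_derivative 1 / x - ((1 + 5 * x + (x - 1) * 5) * (2 * x * (2 + x))
            - (x - 1) * (1 + 5 * x) * (2 * (2 + x) + 2 * x)) / (2 * x * (2 + x))^2) (at x)"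
      using x by (auto intro!: derivative_eq_intros simp: power2_eq_square)
    moreover have "1 / x - ((1 + 5 * x + (x - 1) * 5) * (2 * x * (2 + x))
            - (x - 1) * (1 + 5 * x) * (2 * (2 + x) + 2 * x)) / (2 * x * (2 + x))^2
        = 4 * (x - 1)^3 / (x^2 * (4 + 2 * x)^2)"
    proof -
      have "x \<noteq> 0" "2 + x \<noteq> 0" "4 + 2 * x \<noteq> 0" "2 * x * (2 + x) \<noteq> 0"
        using x by auto
      then show ?thesis
        by (simp add: field_simps) (simp add: algebra_simps power2_eq_square power3_eq_cube)
    qed
    moreover have "0 < 4 * (x - 1)^3 / (x^2 * (4 + 2 * x)^2)"
      using x by simp
    ultimately show "\<exists>d. (?f has_real_derivative d) (at x) \<and> 0 < d"
      by auto
  qed (intro continuous_intros; auto)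
  then show ?thesis by simp
qed

section \<open>Weighted integrals of sign-changing quadratics\<close>

definition kernel_I :: "real \<Rightarrow> real \<Rightarrow> real \<Rightarrow> real \<Rightarrow> real" where
  "kernel_I \<beta> p q s = (q - s) * ((q - p) - (1 + \<beta>) * (s - p))"

definition kernel_J :: "real \<Rightarrow> real \<Rightarrow> real \<Rightarrow> real" where
  "kernel_J p q s = (s - p) * ((q - p) - 3 * (q - s))"

text \<open>\<open>critical_kernel \<alpha> p q T\<close> is \<open>(1 + \<alpha>) (q - p) + (T - q)\<close> times \<open>kernel_I \<beta> p q\<close> for the
  largest \<open>\<beta>\<close> allowed by \<open>\<beta> ((1 + \<alpha>) (q - p) + (T - q)) \<le> 2 (T - q)\<close>.\<close>
definition critical_kernel :: "real \<Rightarrow> real \<Rightarrow> real \<Rightarrow> real \<Rightarrow> real \<Rightarrow> real" where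
  "critical_kernel \<alpha> p q T s =
     (q - s) * (((1 + \<alpha>) * (q - p) + 3 * (T - q)) * (q - s) - 2 * (T - q) * (q - p))"

lemma critical_kernel_le_kernel_I:
  assumes "s \<in> {p..q}" and \<beta>: "\<beta> * ((1 + \<alpha>) * (q - p) + (T - q)) \<le> 2 * (T - q)"
  shows "critical_kernel \<alpha> p q T s \<le> ((1 + \<alpha>) * (q - p) + (T - q)) * kernel_I \<beta> p q s"
proof -
  have "\<beta> * ((1 + \<alpha>) * (q - p) + (T - q)) * (s - p) \<le> 2 * (T - q) * (s - p)"
    using assms by (intro mult_right_mono) auto
  then have "((1 + \<alpha>) * (q - p) + 3 * (T - q)) * (q - s) - 2 * (T - q) * (q - p)
      \<le> ((1 + \<alpha>) * (q - p) + (T - q)) * ((q - p) - (1 + \<beta>) * (s - p))"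
    by (simp add: algebra_simps)
  then show ?thesis
    unfolding critical_kernel_def kernel_I_def using assms(1)
    by (metis atLeastAtMost_iff diff_ge_0_iff_ge mult.left_commute mult_left_mono)
qed

lemma critical_kernel_0_le:
  assumes "0 \<le> \<alpha>" "p \<le> q"
  shows "critical_kernel 0 p q T s \<le> critical_kernel \<alpha> p q T s"
proof -
  have "critical_kernel \<alpha> p q T s - critical_kernel 0 p q T s = \<alpha> * (q - p) * (q - s)^2"
    by (simp add: critical_kernel_def algebra_simps power2_eq_square)
  moreover have "0 \<le> \<alpha> * (q - p) * (q - s)^2"
    using assms by simp
  ultimately show ?thesis by linarith
qed

lemma critical_kernel_powr_weight:
  assumes "p < q" "q < T" "0 \<le> \<alpha>" "0 \<le> e"
  obtains C where "0 < C"
    "\<And>s. s \<le> q \<Longrightarrow> C * critical_kernel \<alpha> p q T s \<le> (T - s) powr e * critical_kernel \<alpha> p q T s"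
proof
  define a where "a = T - q"
  define A where "A = (1 + \<alpha>) * (q - p) + 3 * a"
  define X where "X = a + 2 * a * (q - p) / A"
  have "0 < a" "0 < A"
    using assms by (simp_all add: a_def A_def add_nonneg_pos)
  then have "0 < X"
    using assms by (simp add: X_def add_pos_nonneg)
  show "0 < X powr e"
    using \<open>0 < X\<close> by simp
  fix s
  assume "s \<le> q"
  have kernel: "critical_kernel \<alpha> p q T s = A * ((T - s) - a) * ((T - s) - X)"
    using \<open>0 < A\<close> unfolding critical_kernel_def X_def a_def A_def
    by (simp add: field_simps)
  have "mono_on {0<..} (\<lambda>x::real. x powr e)"
    using assms(4) by (auto intro!: mono_onI powr_mono2)
  then have "0 \<le> ((T - s) - X) * ((T - s) powr e - X powr e)"
    using \<open>0 < X\<close> \<open>s \<le> q\<close> assms(2)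
    by (intro mono_on_diff_mult_diff_nonneg) auto
  moreover have "0 \<le> A * ((T - s) - a)"
    using \<open>0 < A\<close> \<open>s \<le> q\<close> by (simp add: a_def)
  ultimately have "0 \<le> A * ((T - s) - a) * (((T - s) - X) * ((T - s) powr e - X powr e))"
    by simp
  then show "X powr e * critical_kernel \<alpha> p q T s \<le> (T - s) powr e * critical_kernel \<alpha> p q T s"
    unfolding kernel by (simp add: algebra_simps)
qed

lemma integral_critical_kernel_div_square_pos:
  assumes "p < q" "q < T"
  shows "0 < integral {p..q} (\<lambda>s. critical_kernel 0 p q T s / (T - s)^2)"
proof -
  define a b \<tau> where "a = T - q" and "b = T - p" and "\<tau> = q - p"
  define A where "A = \<tau> + 3 * a"
  have "0 < a" "a < b" "\<tau> = b - a"
    using assms by (auto simp: a_def b_def \<tau>_def)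
  define F where "F x = A * x - 2 * a * (A + \<tau>) * ln x - a^2 * (A + 2 * \<tau>) / x" for x
  have "(F has_real_derivative (x - a) * (A * (x - a) - 2 * a * \<tau>) / x^2) (at x)" if "0 < x" for x
    unfolding F_def using that
    by (auto intro!: derivative_eq_intros simp: field_simps) (simp add: algebra_simps power2_eq_square)
  from integral_reflect_antiderivative[OF _ assms(2) this]
  have "integral {p..q} (\<lambda>s. critical_kernel 0 p q T s / (T - s)^2) = F b - F a"
    using assms by (simp add: critical_kernel_def a_def b_def \<tau>_def A_def algebra_simps)
  also have "\<dots> = A * \<tau> + a * (A + 2 * \<tau>) * \<tau> / b - 2 * a * (A + \<tau>) * ln (b / a)"
    using \<open>0 < a\<close> \<open>a < b\<close> unfolding F_def \<open>\<tau> = b - a\<close>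
    by (simp add: ln_div field_simps power2_eq_square)
  finally have closed_form: "integral {p..q} (\<lambda>s. critical_kernel 0 p q T s / (T - s)^2)
      = A * \<tau> + a * (A + 2 * \<tau>) * \<tau> / b - 2 * a * (A + \<tau>) * ln (b / a)" .
  define R where "R = (b - a) * (5 * a + b) / (a * (2 * a + 4 * b))"
  have "A * \<tau> + a * (A + 2 * \<tau>) * \<tau> / b = 2 * a * (A + \<tau>) * R"
    using \<open>0 < a\<close> \<open>a < b\<close> unfolding R_def A_def \<open>\<tau> = b - a\<close>
    by (simp add: divide_simps) (simp add: algebra_simps)
  moreover have "2 * a * (A + \<tau>) * ln (b / a) < 2 * a * (A + \<tau>) * R"
  proof (rule mult_strict_left_mono)
    show "ln (b / a) < R"
      using ln_less_rational_bound[of "b / a"] \<open>0 < a\<close> \<open>a < b\<close> by (simp add: R_def divide_simps)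
    show "0 < 2 * a * (A + \<tau>)"
      using \<open>0 < a\<close> \<open>a < b\<close> by (simp add: A_def \<open>\<tau> = b - a\<close>)
  qed
  ultimately show ?thesis
    unfolding closed_form by linarith
qed

lemma integral_critical_kernel_div_cube_pos:
  assumes "p < q" "q < T"
  shows "0 < integral {p..q} (\<lambda>s. critical_kernel 0 p q T s / (T - s)^3)"
proof -
  define a b \<tau> where "a = T - q" and "b = T - p" and "\<tau> = q - p"
  define A where "A = \<tau> + 3 * a"
  have "0 < a" "a < b" "\<tau> = b - a"
    using assms by (auto simp: a_def b_def \<tau>_def)
  define F where "F x = A * ln x + 2 * a * (A + \<tau>) / x - a^2 * (A + 2 * \<tau>) / (2 * x^2)" for x
  have "(F has_real_derivative (x - a) * (A * (x - a) - 2 * a * \<tau>) / x^3) (at x)" if "0 < x" for x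
  proof -
    have "(F has_real_derivative A / x - 2 * a * (A + \<tau>) / x^2 + a^2 * (A + 2 * \<tau>) / x^3) (at x)"
      unfolding F_def using that
      by (auto intro!: derivative_eq_intros) (simp add: divide_simps, simp add: algebra_simps eval_nat_numeral)
    moreover have "A / x - 2 * a * (A + \<tau>) / x^2 + a^2 * (A + 2 * \<tau>) / x^3
        = (x - a) * (A * (x - a) - 2 * a * \<tau>) / x^3"
      using that by (simp add: divide_simps) (simp add: algebra_simps eval_nat_numeral)
    ultimately show ?thesis by simp
  qed
  from integral_reflect_antiderivative[OF _ assms(2) this]
  have "integral {p..q} (\<lambda>s. critical_kernel 0 p q T s / (T - s)^3) = F b - F a"
    using assms by (simp add: critical_kernel_def a_def b_def \<tau>_def A_def algebra_simps)
  also have "\<dots> = A * ln (b / a)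
      + (2 * a * (A + \<tau>) * (1 / b - 1 / a) - a^2 * (A + 2 * \<tau>) / 2 * (1 / b^2 - 1 / a^2))"
    using \<open>0 < a\<close> \<open>a < b\<close> unfolding F_def
    by (simp add: ln_div divide_simps) (simp add: algebra_simps eval_nat_numeral)
  finally have closed_form: "integral {p..q} (\<lambda>s. critical_kernel 0 p q T s / (T - s)^3)
      = A * ln (b / a)
        + (2 * a * (A + \<tau>) * (1 / b - 1 / a) - a^2 * (A + 2 * \<tau>) / 2 * (1 / b^2 - 1 / a^2))" .
  define R where "R = (b - a) * (a + 5 * b) / (2 * b * (2 * a + b))"
  have "2 * a * (A + \<tau>) * (1 / b - 1 / a) - a^2 * (A + 2 * \<tau>) / 2 * (1 / b^2 - 1 / a^2) = - A * R"
    using \<open>0 < a\<close> \<open>a < b\<close> unfolding R_def A_def \<open>\<tau> = b - a\<close>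
    by (simp add: divide_simps) (simp add: algebra_simps eval_nat_numeral)
  moreover have "A * R < A * ln (b / a)"
  proof (rule mult_strict_left_mono)
    show "R < ln (b / a)"
      using ln_greater_rational_bound[of "b / a"] \<open>0 < a\<close> \<open>a < b\<close> by (simp add: R_def divide_simps)
    show "0 < A"
      using \<open>0 < a\<close> \<open>a < b\<close> by (simp add: A_def \<open>\<tau> = b - a\<close>)
  qed
  ultimately show ?thesis
    unfolding closed_form by linarith
qed

lemma integral_kernel_I_pos:
  fixes \<gamma> :: real and m :: nat
  assumes "p < q" "q < T" "0 \<le> \<alpha>" "\<gamma> \<le> real m"
    and \<beta>: "\<beta> * ((1 + \<alpha>) * (q - p) + (T - q)) \<le> 2 * (T - q)"
    and pos: "0 < integral {p..q} (\<lambda>s. critical_kernel 0 p q T s / (T - s)^m)"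
  shows "0 < integral {p..q} (\<lambda>s. kernel_I \<beta> p q s * (T - s) powr (-\<gamma>))"
proof -
  define D where "D = (1 + \<alpha>) * (q - p) + (T - q)"
  have "0 < D"
    using assms by (simp add: D_def add_nonneg_pos)
  obtain C where "0 < C" and C:
    "\<And>s. s \<le> q \<Longrightarrow> C * critical_kernel \<alpha> p q T s \<le> (T - s) powr (m - \<gamma>) * critical_kernel \<alpha> p q T s"
    using critical_kernel_powr_weight[OF assms(1-3), of "m - \<gamma>"] assms(4) by auto
  have pointwise: "C * (critical_kernel 0 p q T s / (T - s)^m) \<le> D * (kernel_I \<beta> p q s * (T - s) powr (-\<gamma>))"
    if s: "s \<in> {p..q}" for s
  proof -
    have "0 < T - s"
      using s assms(2) by simp
    have "C * (critical_kernel 0 p q T s / (T - s)^m) \<le> C * critical_kernel \<alpha> p q T s / (T - s)^m"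
      using critical_kernel_0_le[OF assms(3)] assms(1) \<open>0 < C\<close> \<open>0 < T - s\<close>
      by (simp add: divide_right_mono)
    also have "\<dots> \<le> (T - s) powr (m - \<gamma>) * critical_kernel \<alpha> p q T s / (T - s)^m"
      using C[of s] s \<open>0 < T - s\<close> by (simp add: divide_right_mono)
    also have "\<dots> = critical_kernel \<alpha> p q T s * (T - s) powr (-\<gamma>)"
      using \<open>0 < T - s\<close> by (simp add: powr_diff powr_realpow powr_minus divide_simps)
    also have "\<dots> \<le> D * kernel_I \<beta> p q s * (T - s) powr (-\<gamma>)"
      using critical_kernel_le_kernel_I[OF s \<beta>] by (simp add: D_def mult_right_mono)
    finally show ?thesis
      by (simp add: mult.assoc)
  qed
  have "0 < C * integral {p..q} (\<lambda>s. critical_kernel 0 p q T s / (T - s)^m)"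
    using \<open>0 < C\<close> pos by simp
  also have "\<dots> \<le> D * integral {p..q} (\<lambda>s. kernel_I \<beta> p q s * (T - s) powr (-\<gamma>))"
    unfolding integral_mult_right[symmetric] using assms(2)
    by (intro integral_le integrable_continuous_interval pointwise)
       (auto simp: critical_kernel_def kernel_I_def intro!: continuous_intros)
  finally show ?thesis
    using \<open>0 < D\<close> by (simp add: zero_less_mult_iff)
qed

lemma integral_kernel_J_eq_0:
  assumes "p \<le> q"
  shows "integral {p..q} (kernel_J p q) = 0"
proof -
  have "(kernel_J p q has_integral
      ((\<lambda>s. (s - p)^3 - (q - p) * (s - p)^2) q - (\<lambda>s. (s - p)^3 - (q - p) * (s - p)^2) p)) {p..q}"
    by (rule has_integral_of_real_derivative[OF assms])
       (auto intro!: derivative_eq_intros simp: kernel_J_def algebra_simps power2_eq_square)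
  then show ?thesis
    by (simp add: integral_unique power2_eq_square power3_eq_cube)
qed

lemma integral_quadratic_bubble:
  fixes p q :: real
  assumes "p \<le> q"
  shows "integral {p..q} (\<lambda>s. (s - p) * (q - s)) = (q - p)^3 / 6"
proof -
  have "((\<lambda>s. (s - p) * (q - s)) has_integral
      ((\<lambda>s. (q - p) * (s - p)^2 / 2 - (s - p)^3 / 3) q - (\<lambda>s. (q - p) * (s - p)^2 / 2 - (s - p)^3 / 3) p)) {p..q}"
    by (rule has_integral_of_real_derivative[OF assms])
       (auto intro!: derivative_eq_intros simp: field_simps power2_eq_square)
  then show ?thesis
    by (simp add: integral_unique field_simps power2_eq_square power3_eq_cube)
qed

lemma integral_kernel_J_pos:
  assumes "p < q" "q < T" "0 < \<gamma>"
  shows "0 < integral {p..q} (\<lambda>s. kernel_J p q s * (T - s) powr (-\<gamma>))"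
proof -
  define s\<^sub>0 where "s\<^sub>0 = q - (q - p) / 3"
  define w where "w s = (T - s) powr (-\<gamma>)" for s
  have "s\<^sub>0 < q"
    using assms by (simp add: s\<^sub>0_def)
  have kernel: "kernel_J p q s = 3 * (s - p) * (s - s\<^sub>0)" for s
    by (simp add: kernel_J_def s\<^sub>0_def field_simps)
  have "mono_on {..<T} w"
    using assms(3) by (auto intro!: mono_onI powr_mono2' simp: w_def)
  then have sign: "0 \<le> (s - s\<^sub>0) * (w s - w s\<^sub>0)" if "s \<le> q" for s
    using that \<open>s\<^sub>0 < q\<close> assms(2) by (intro mono_on_diff_mult_diff_nonneg) auto
  have "w s\<^sub>0 < w q"
    using \<open>s\<^sub>0 < q\<close> assms by (simp add: w_def powr_less_mono2_neg)
  have "0 < integral {p..q} (\<lambda>s. kernel_J p q s * (w s - w s\<^sub>0))"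
  proof (rule continuous_nonneg_integral_pos[OF _ assms(1)])
    show "continuous_on {p..q} (\<lambda>s. kernel_J p q s * (w s - w s\<^sub>0))"
      using assms(2) by (auto simp: kernel_J_def w_def intro!: continuous_intros)
    show "0 \<le> kernel_J p q s * (w s - w s\<^sub>0)" if "s \<in> {p..q}" for s
      using sign[of s] that unfolding kernel by (simp add: mult.assoc)
    show "0 < kernel_J p q q * (w q - w s\<^sub>0)"
      using assms(1) \<open>w s\<^sub>0 < w q\<close> by (simp add: kernel_J_def)
  qed (use assms(1) in auto)
  also have "\<dots> = integral {p..q} (\<lambda>s. kernel_J p q s * w s) - w s\<^sub>0 * integral {p..q} (kernel_J p q)"
    unfolding integral_mult_right[symmetric] using assms(2)
    by (subst integral_diff[symmetric])
       (auto simp: kernel_J_def w_def algebra_simps intro!: integrable_continuous_interval continuous_intros)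
  finally show ?thesis
    using integral_kernel_J_eq_0 assms(1) by (simp add: w_def)
qed

lemma has_real_derivative_integral_powr_weight:
  fixes K :: "real \<Rightarrow> real"
  assumes K: "continuous_on {p..q} K" and "q < T"
  shows "((\<lambda>T. integral {p..q} (\<lambda>s. K s * (T - s) powr (-\<gamma>))) has_real_derivative
           - \<gamma> * integral {p..q} (\<lambda>s. K s * (T - s) powr (-\<gamma> - 1))) (at T)"
proof -
  define U where "U = {q<..}"
  have "continuous_on (U \<times> {p..q}) (\<lambda>z. K (snd z))"
    by (rule continuous_on_compose2[OF K]) (auto intro: continuous_intros)
  then have "continuous_on (U \<times> {p..q}) (\<lambda>z. K (snd z) * (- \<gamma> * (fst z - snd z) powr (-\<gamma> - 1)))"
    by (intro continuous_intros) (auto simp: U_def)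
  then have "((\<lambda>T. integral (cbox p q) (\<lambda>s. K s * (T - s) powr (-\<gamma>))) has_real_derivative
      integral (cbox p q) (\<lambda>s. K s * (- \<gamma> * (T - s) powr (-\<gamma> - 1)))) (at T within U)"
  proof (intro leibniz_rule_field_derivative[where fx = "\<lambda>x s. K s * (- \<gamma> * (x - s) powr (-\<gamma> - 1))"])
    fix x s
    assume "x \<in> U" "s \<in> cbox p q"
    then have "0 < x - s"
      by (auto simp: U_def)
    then show "((\<lambda>x. K s * (x - s) powr (-\<gamma>)) has_real_derivative K s * (- \<gamma> * (x - s) powr (-\<gamma> - 1)))
        (at x within U)"
      by (auto intro!: derivative_eq_intros)
  next
    fix x
    assume "x \<in> U"
    then show "(\<lambda>s. K s * (x - s) powr (-\<gamma>)) integrable_on cbox p q"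
      unfolding box_real(2)
      by (intro integrable_continuous_interval continuous_intros K) (auto simp: U_def)
  qed (use \<open>q < T\<close> in \<open>auto simp: U_def split_beta box_real(2)\<close>)
  moreover have "at T within U = at T"
    using \<open>q < T\<close> by (intro at_within_open) (auto simp: U_def)
  ultimately show ?thesis
    by (simp add: mult.left_commute)
qed

lemma integral_powr_weight_strict_antimono:
  fixes K :: "real \<Rightarrow> real"
  assumes K: "continuous_on {p..q} K" and "q < T\<^sub>1" "T\<^sub>1 < T\<^sub>2" "0 < \<gamma>"
    and pos: "\<And>T. T \<in> {T\<^sub>1..T\<^sub>2} \<Longrightarrow> 0 < integral {p..q} (\<lambda>s. K s * (T - s) powr (-\<gamma> - 1))"
  shows "integral {p..q} (\<lambda>s. K s * (T\<^sub>2 - s) powr (-\<gamma>)) < integral {p..q} (\<lambda>s. K s * (T\<^sub>1 - s) powr (-\<gamma>))"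
proof (rule DERIV_neg_imp_decreasing[OF \<open>T\<^sub>1 < T\<^sub>2\<close>])
  fix T
  assume "T\<^sub>1 \<le> T" "T \<le> T\<^sub>2"
  then show "\<exists>d. ((\<lambda>T. integral {p..q} (\<lambda>s. K s * (T - s) powr (-\<gamma>))) has_real_derivative d) (at T) \<and> d < 0"
    using has_real_derivative_integral_powr_weight[OF K, of T \<gamma>] pos[of T] \<open>q < T\<^sub>1\<close> \<open>0 < \<gamma>\<close>
    by (intro exI conjI) (auto simp: mult_pos_pos)
qed

section \<open>The coefficients as weighted integrals\<close>

lemma varpi1_eq: "varpi1 t \<alpha> n s = (tshift t (\<alpha>/2) n - s) powr (-\<alpha>) / Gamma (1 - \<alpha>)"
  by (simp add: varpi1_def omega_def)

lemma has_real_derivative_varpi1: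
  assumes "s < tshift t (\<alpha>/2) n"
  shows "(varpi1 t \<alpha> n has_real_derivative
           \<alpha> / Gamma (1 - \<alpha>) * (tshift t (\<alpha>/2) n - s) powr (-\<alpha> - 1)) (at s)"
proof -
  have "((\<lambda>s. (tshift t (\<alpha>/2) n - s) powr (-\<alpha>)) has_real_derivative
      \<alpha> * (tshift t (\<alpha>/2) n - s) powr (-\<alpha> - 1)) (at s)"
    using assms by (auto intro!: derivative_eq_intros)
  from DERIV_cdivide[OF this, of "Gamma (1 - \<alpha>)"] show ?thesis
    unfolding varpi1_eq[abs_def] by simp
qed

lemma varpi2_eq:
  assumes "s < tshift t (\<alpha>/2) n"
  shows "varpi2 t \<alpha> n s = \<alpha> / Gamma (1 - \<alpha>) * (tshift t (\<alpha>/2) n - s) powr (-\<alpha> - 1)"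
  unfolding varpi2_def by (rule DERIV_imp_deriv[OF has_real_derivative_varpi1[OF assms]])

lemma Iint_eq:
  assumes "t k < tshift t (\<alpha>/2) n"
  shows "Iint t \<alpha> n k = \<alpha> / Gamma (1 - \<alpha>) / tau t k *
    integral {t (k - 1)..t k} (\<lambda>s. (t k - s) * (tshift t (\<alpha>/2) n - s) powr (-\<alpha> - 1))"
proof -
  have "Iint t \<alpha> n k = integral {t (k - 1)..t k}
      (\<lambda>s. \<alpha> / Gamma (1 - \<alpha>) / tau t k * ((t k - s) * (tshift t (\<alpha>/2) n - s) powr (-\<alpha> - 1)))"
    unfolding Iint_def using assms by (intro integral_cong) (auto simp: varpi2_eq mult_ac)
  then show ?thesis by simp
qed

lemma Jint_eq:
  assumes "t k < tshift t (\<alpha>/2) n"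
  shows "Jint t \<alpha> n k = \<alpha> / Gamma (1 - \<alpha>) / tau t k *
    integral {t (k - 1)..t k} (\<lambda>s. (s - t (k - 1)) * (tshift t (\<alpha>/2) n - s) powr (-\<alpha> - 1))"
proof -
  have "Jint t \<alpha> n k = integral {t (k - 1)..t k}
      (\<lambda>s. \<alpha> / Gamma (1 - \<alpha>) / tau t k * ((s - t (k - 1)) * (tshift t (\<alpha>/2) n - s) powr (-\<alpha> - 1)))"
    unfolding Jint_def using assms by (intro integral_cong) (auto simp: varpi2_eq mult_ac)
  then show ?thesis by simp
qed

lemma zeta_eq:
  assumes "t (k - 1) \<le> t k" "t k < tshift t (\<alpha>/2) n"
  shows "zeta t \<alpha> n k = \<alpha> / Gamma (1 - \<alpha>) / (tau t k)^2 *
    integral {t (k - 1)..t k} (\<lambda>s. (s - t (k - 1)) * (t k - s) * (tshift t (\<alpha>/2) n - s) powr (-\<alpha> - 1))"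
proof -
  define p q T c where "p = t (k - 1)" and "q = t k" and "T = tshift t (\<alpha>/2) n"
    and "c = \<alpha> / Gamma (1 - \<alpha>)"
  define w where "w = varpi1 t \<alpha> n"
  define H where "H s = (s - p) * (q - s) * w s" for s
  have "q < T"
    using assms by (simp add: q_def T_def)
  have w: "continuous_on {p..q} w"
  proof (intro continuous_at_imp_continuous_on ballI)
    fix s
    assume "s \<in> {p..q}"
    then show "isCont w s"
      using has_real_derivative_varpi1[of s t \<alpha> n] \<open>q < T\<close>
      by (auto simp: w_def T_def intro: DERIV_isCont)
  qed
  have "((\<lambda>s. (-2) * ((s - (p + q) / 2) * w s) + c * ((s - p) * (q - s) * (T - s) powr (-\<alpha> - 1)))
      has_integral (H q - H p)) {p..q}"
    using assms(1) \<open>q < T\<close> unfolding H_def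
    by (intro has_integral_of_real_derivative)
       (auto intro!: derivative_eq_intros has_real_derivative_varpi1
         simp: p_def q_def T_def c_def[symmetric] w_def field_simps)
  then have "integral {p..q}
      (\<lambda>s. (-2) * ((s - (p + q) / 2) * w s) + c * ((s - p) * (q - s) * (T - s) powr (-\<alpha> - 1))) = 0"
    by (simp add: H_def integral_unique)
  then have "2 * integral {p..q} (\<lambda>s. (s - (p + q) / 2) * w s)
      = c * integral {p..q} (\<lambda>s. (s - p) * (q - s) * (T - s) powr (-\<alpha> - 1))"
    using \<open>q < T\<close> by (subst (asm) integral_lincomb_continuous) (auto intro!: continuous_intros w)
  then show ?thesis
    unfolding zeta_def by (simp add: p_def q_def T_def c_def w_def)
qed

lemma Iint_Jint_zeta_lincomb_eq:
  assumes "t (k - 1) < t k" "t k < tshift t (\<alpha>/2) n"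
  shows "a * Iint t \<alpha> n k + b * Jint t \<alpha> n k + c * zeta t \<alpha> n k = \<alpha> / Gamma (1 - \<alpha>) / (tau t k)^2 *
    integral {t (k - 1)..t k} (\<lambda>s. (a * tau t k * (t k - s) + b * tau t k * (s - t (k - 1))
      + c * (s - t (k - 1)) * (t k - s)) * (tshift t (\<alpha>/2) n - s) powr (-\<alpha> - 1))"
proof -
  define p q T d where "p = t (k - 1)" and "q = t k" and "T = tshift t (\<alpha>/2) n" and "d = tau t k"
  define g where "g = \<alpha> / Gamma (1 - \<alpha>)"
  define w where "w s = (T - s) powr (-\<alpha> - 1)" for s
  define X X' Y where "X = integral {p..q} (\<lambda>s. (q - s) * w s)"
    and "X' = integral {p..q} (\<lambda>s. (s - p) * w s)"
    and "Y = integral {p..q} (\<lambda>s. (s - p) * (q - s) * w s)"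
  have "q < T" "d \<noteq> 0"
    using assms by (auto simp: p_def q_def T_def d_def tau_def)
  have "((\<lambda>s. a * d * ((q - s) * w s) + b * d * ((s - p) * w s) + c * ((s - p) * (q - s) * w s))
      has_integral (a * d * X + b * d * X' + c * Y)) {p..q}"
    unfolding X_def X'_def Y_def using \<open>q < T\<close>
    by (intro has_integral_add has_integral_mult_right integrable_integral integrable_continuous_interval)
       (auto simp: w_def intro!: continuous_intros)
  then have "integral {p..q} (\<lambda>s. (a * d * (q - s) + b * d * (s - p) + c * (s - p) * (q - s)) * w s)
      = a * d * X + b * d * X' + c * Y"
    by (simp add: integral_unique algebra_simps)
  moreover have "Iint t \<alpha> n k = g / d * X" "Jint t \<alpha> n k = g / d * X'" "zeta t \<alpha> n k = g / d^2 * Y"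
    using Iint_eq[of t k \<alpha> n] Jint_eq[of t k \<alpha> n] zeta_eq[of t k \<alpha> n] assms
    by (simp_all add: X_def X'_def Y_def w_def g_def d_def p_def q_def T_def)
  ultimately have "a * Iint t \<alpha> n k + b * Jint t \<alpha> n k + c * zeta t \<alpha> n k = g / d^2 *
      integral {p..q} (\<lambda>s. (a * d * (q - s) + b * d * (s - p) + c * (s - p) * (q - s)) * w s)"
    using \<open>d \<noteq> 0\<close> by (simp add: field_simps power2_eq_square)
  then show ?thesis
    by (simp add: g_def w_def d_def p_def q_def T_def)
qed

lemma Iint_minus_zeta_eq:
  assumes "t (k - 1) < t k" "t k < tshift t (\<alpha>/2) n"
  shows "Iint t \<alpha> n k - (1 + \<beta>) * zeta t \<alpha> n k = \<alpha> / Gamma (1 - \<alpha>) / (tau t k)^2 *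
    integral {t (k - 1)..t k} (\<lambda>s. kernel_I \<beta> (t (k - 1)) (t k) s * (tshift t (\<alpha>/2) n - s) powr (-\<alpha> - 1))"
  using Iint_Jint_zeta_lincomb_eq[OF assms, of 1 0 "- (1 + \<beta>)"]
  by (simp add: kernel_I_def tau_def algebra_simps)

lemma Jint_minus_zeta_eq:
  assumes "t (k - 1) < t k" "t k < tshift t (\<alpha>/2) n"
  shows "Jint t \<alpha> n k - 3 * zeta t \<alpha> n k = \<alpha> / Gamma (1 - \<alpha>) / (tau t k)^2 *
    integral {t (k - 1)..t k} (\<lambda>s. kernel_J (t (k - 1)) (t k) s * (tshift t (\<alpha>/2) n - s) powr (-\<alpha> - 1))"
  using Iint_Jint_zeta_lincomb_eq[OF assms, of 0 1 "- 3"]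
  by (simp add: kernel_J_def tau_def algebra_simps)

lemma zeta_less:
  assumes "t (k - 1) < t k" "t k < tshift t (\<alpha>/2) n" "0 < \<alpha>" "\<alpha> < 1"
  shows "zeta t \<alpha> n k < \<alpha> / Gamma (1 - \<alpha>) * tau t k / 6 * (tshift t (\<alpha>/2) n - t k) powr (-\<alpha> - 1)"
proof -
  define p q T where "p = t (k - 1)" and "q = t k" and "T = tshift t (\<alpha>/2) n"
  define c where "c = \<alpha> / Gamma (1 - \<alpha>)"
  have "p < q" "q < T" "tau t k = q - p" "0 < c"
    using assms by (auto simp: p_def q_def T_def tau_def c_def)
  have "integral {p..q} (\<lambda>s. (s - p) * (q - s) * (T - s) powr (-\<alpha> - 1))
      < integral {p..q} (\<lambda>s. (s - p) * (q - s) * (T - q) powr (-\<alpha> - 1))"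
  proof (rule integral_less_real)
    fix s
    assume "s \<in> {p<..<q}"
    then show "(s - p) * (q - s) * (T - s) powr (-\<alpha> - 1) < (s - p) * (q - s) * (T - q) powr (-\<alpha> - 1)"
      using \<open>q < T\<close> assms(3) by (intro mult_strict_left_mono powr_less_mono2_neg) auto
  qed (use \<open>p < q\<close> \<open>q < T\<close> in \<open>auto intro!: continuous_intros\<close>)
  also have "\<dots> = (q - p)^3 / 6 * (T - q) powr (-\<alpha> - 1)"
    using integral_quadratic_bubble[of p q] \<open>p < q\<close> by simp
  finally have "c / (q - p)^2 * integral {p..q} (\<lambda>s. (s - p) * (q - s) * (T - s) powr (-\<alpha> - 1))
      < c / (q - p)^2 * ((q - p)^3 / 6 * (T - q) powr (-\<alpha> - 1))"
    using \<open>p < q\<close> \<open>0 < c\<close> by (intro mult_strict_left_mono) auto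
  also have "\<dots> = c * (q - p) / 6 * (T - q) powr (-\<alpha> - 1)"
    using \<open>p < q\<close> by (simp add: power2_eq_square power3_eq_cube)
  finally show ?thesis
    using zeta_eq[of t k \<alpha> n] assms(1,2) \<open>tau t k = q - p\<close> by (simp add: p_def q_def T_def c_def)
qed

section \<open>Nonuniform meshes\<close>

lemma tshift_eq: "tshift t (\<alpha>/2) m = t (m - 1) + (1 - \<alpha>/2) * tau t m"
  by (simp add: tshift_def tau_def algebra_simps)

locale fractional_mesh =
  fixes t :: "nat \<Rightarrow> real" and N :: nat and \<alpha> :: real
  assumes increasing: "\<And>k. k < N \<Longrightarrow> t k < t (Suc k)"
    and alpha_pos: "0 < \<alpha>" and alpha_less_1: "\<alpha> < 1"
begin

lemma node_less:
  assumes "i < j" "j \<le> N"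
  shows "t i < t j"
  using assms
proof (induction j)
  case (Suc j)
  then show ?case
    using increasing[of j] by (cases "i = j") auto
qed simp

lemma node_le: "i \<le> j \<Longrightarrow> j \<le> N \<Longrightarrow> t i \<le> t j"
  using node_less[of i j] by (cases "i = j") auto

lemma tau_pos: "1 \<le> k \<Longrightarrow> k \<le> N \<Longrightarrow> 0 < tau t k"
  using node_less[of "k - 1" k] by (simp add: tau_def)

lemma node_less_tshift:
  assumes "k < m" "m \<le> N"
  shows "t k < tshift t (\<alpha>/2) m"
proof -
  have "t k \<le> t (m - 1)"
    using assms by (intro node_le) auto
  also have "\<dots> < tshift t (\<alpha>/2) m"
    using tau_pos[of m] assms alpha_less_1 by (simp add: tshift_eq)
  finally show ?thesis .
qed

lemma tshift_less_node:
  assumes "1 \<le> m" "m \<le> N"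
  shows "tshift t (\<alpha>/2) m < t m"
proof -
  have "(1 - \<alpha>/2) * tau t m < 1 * tau t m"
    using tau_pos[OF assms] alpha_pos by (intro mult_strict_right_mono) auto
  then show ?thesis
    by (simp add: tshift_eq tau_def)
qed

lemma tshift_less_tshift:
  assumes "1 \<le> m" "m < m'" "m' \<le> N"
  shows "tshift t (\<alpha>/2) m < tshift t (\<alpha>/2) m'"
  using tshift_less_node[of m] node_less_tshift[of m m'] assms by simp

lemma betak_admissible:
  assumes "1 \<le> k" "k < m" "m \<le> N" "tshift t (\<alpha>/2) m \<le> T"
  shows "betak t \<alpha> (k + 1) * ((1 + \<alpha>) * tau t k + (T - t k)) \<le> 2 * (T - t k)"
proof -
  define x where "x = (1 - \<alpha>/2) * tau t (k + 1) / tau t k"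
  have "0 < tau t k" "0 < tau t (k + 1)"
    using assms by (simp_all add: tau_pos)
  then have "0 \<le> x"
    using alpha_less_1 by (simp add: x_def)
  have "tshift t (\<alpha>/2) (k + 1) \<le> tshift t (\<alpha>/2) m"
    using tshift_less_tshift[of "k + 1" m] assms by (cases "k + 1 = m") auto
  then have "x * tau t k \<le> T - t k"
    using \<open>0 < tau t k\<close> assms(4) by (simp add: x_def tshift_eq)
  then have "2 * x * ((1 + \<alpha>) * tau t k + (T - t k)) \<le> 2 * (T - t k) * (1 + \<alpha> + x)"
    using alpha_pos mult_right_mono[of "x * tau t k" "T - t k" "1 + \<alpha>"] by (simp add: algebra_simps)
  moreover have "betak t \<alpha> (k + 1) = 2 * x / (1 + \<alpha> + x)"
    by (simp add: betak_def ratio_def x_def)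
  moreover have "0 < 1 + \<alpha> + x"
    using alpha_pos \<open>0 \<le> x\<close> by simp
  ultimately show ?thesis
    by (simp add: pos_divide_le_eq)
qed

lemma weight_prefactor_pos: "1 \<le> k \<Longrightarrow> k \<le> N \<Longrightarrow> 0 < \<alpha> / Gamma (1 - \<alpha>) / (tau t k)^2"
  using alpha_pos alpha_less_1 tau_pos[of k] by simp

lemma Iint_gt_betak_zeta:
  assumes "1 \<le> k" "k < n" "n \<le> N"
  shows "(1 + betak t \<alpha> (k + 1)) * zeta t \<alpha> n k < Iint t \<alpha> n k"
proof -
  define p q T \<beta> where "p = t (k - 1)" and "q = t k" and "T = tshift t (\<alpha>/2) n"
    and "\<beta> = betak t \<alpha> (k + 1)"
  have "p < q" "q < T" "tau t k = q - p"
    using assms node_less[of "k - 1" k] node_less_tshift[of k n]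
    by (auto simp: p_def q_def T_def tau_def)
  moreover have "\<beta> * ((1 + \<alpha>) * (q - p) + (T - q)) \<le> 2 * (T - q)"
    using betak_admissible[of k n T] assms \<open>tau t k = q - p\<close> by (simp add: \<beta>_def q_def T_def)
  ultimately have "0 < integral {p..q} (\<lambda>s. kernel_I \<beta> p q s * (T - s) powr (- (\<alpha> + 1)))"
    using alpha_pos alpha_less_1
    by (intro integral_kernel_I_pos[where m = 2] integral_critical_kernel_div_square_pos) auto
  then have "0 < \<alpha> / Gamma (1 - \<alpha>) / (tau t k)^2 *
      integral {p..q} (\<lambda>s. kernel_I \<beta> p q s * (T - s) powr (- (\<alpha> + 1)))"
    using weight_prefactor_pos[of k] assms by (intro mult_pos_pos) auto
  also have "\<dots> = Iint t \<alpha> n k - (1 + \<beta>) * zeta t \<alpha> n k"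
    using Iint_minus_zeta_eq[of t k \<alpha> n \<beta>] \<open>p < q\<close> \<open>q < T\<close> by (simp add: p_def q_def T_def)
  finally show ?thesis
    by (simp add: \<beta>_def)
qed

lemma Jint_gt_zeta:
  assumes "1 \<le> k" "k < n" "n \<le> N"
  shows "3 * zeta t \<alpha> n k < Jint t \<alpha> n k"
proof -
  define p q T where "p = t (k - 1)" and "q = t k" and "T = tshift t (\<alpha>/2) n"
  have "p < q" "q < T"
    using assms node_less[of "k - 1" k] node_less_tshift[of k n] by (auto simp: p_def q_def T_def)
  then have "0 < integral {p..q} (\<lambda>s. kernel_J p q s * (T - s) powr (- (\<alpha> + 1)))"
    using alpha_pos by (intro integral_kernel_J_pos) auto
  then have "0 < \<alpha> / Gamma (1 - \<alpha>) / (tau t k)^2 *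
      integral {p..q} (\<lambda>s. kernel_J p q s * (T - s) powr (- (\<alpha> + 1)))"
    using weight_prefactor_pos[of k] assms by (intro mult_pos_pos) auto
  also have "\<dots> = Jint t \<alpha> n k - 3 * zeta t \<alpha> n k"
    using Jint_minus_zeta_eq[of t k \<alpha> n] \<open>p < q\<close> \<open>q < T\<close> by (simp add: p_def q_def T_def)
  finally show ?thesis
    by simp
qed

lemma Iint_minus_betak_zeta_decreasing:
  assumes "1 \<le> k" "k + 1 < n" "n \<le> N"
  shows "Iint t \<alpha> n k - (1 + betak t \<alpha> (k + 1)) * zeta t \<alpha> n k
    < Iint t \<alpha> (n - 1) k - (1 + betak t \<alpha> (k + 1)) * zeta t \<alpha> (n - 1) k"
proof -
  define p q T\<^sub>1 T\<^sub>2 \<beta> where "p = t (k - 1)" and "q = t k" and "T\<^sub>1 = tshift t (\<alpha>/2) (n - 1)"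
    and "T\<^sub>2 = tshift t (\<alpha>/2) n" and "\<beta> = betak t \<alpha> (k + 1)"
  have "p < q" "q < T\<^sub>1" "T\<^sub>1 < T\<^sub>2" "tau t k = q - p"
    using assms node_less[of "k - 1" k] node_less_tshift[of k "n - 1"] tshift_less_tshift[of "n - 1" n]
    by (auto simp: p_def q_def T\<^sub>1_def T\<^sub>2_def tau_def)
  have "integral {p..q} (\<lambda>s. kernel_I \<beta> p q s * (T\<^sub>2 - s) powr (- (\<alpha> + 1)))
      < integral {p..q} (\<lambda>s. kernel_I \<beta> p q s * (T\<^sub>1 - s) powr (- (\<alpha> + 1)))"
  proof (rule integral_powr_weight_strict_antimono)
    fix T
    assume "T \<in> {T\<^sub>1..T\<^sub>2}"
    then have "q < T" "\<beta> * ((1 + \<alpha>) * (q - p) + (T - q)) \<le> 2 * (T - q)"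
      using \<open>q < T\<^sub>1\<close> betak_admissible[of k "n - 1" T] assms \<open>tau t k = q - p\<close>
      by (auto simp: \<beta>_def q_def T\<^sub>1_def)
    then have "0 < integral {p..q} (\<lambda>s. kernel_I \<beta> p q s * (T - s) powr (- (\<alpha> + 2)))"
      using \<open>p < q\<close> alpha_pos alpha_less_1
      by (intro integral_kernel_I_pos[where m = 3] integral_critical_kernel_div_cube_pos) auto
    then show "0 < integral {p..q} (\<lambda>s. kernel_I \<beta> p q s * (T - s) powr (- (\<alpha> + 1) - 1))"
      by (simp add: algebra_simps)
  qed (use \<open>q < T\<^sub>1\<close> \<open>T\<^sub>1 < T\<^sub>2\<close> alpha_pos in \<open>auto simp: kernel_I_def intro!: continuous_intros\<close>)
  then have "\<alpha> / Gamma (1 - \<alpha>) / (tau t k)^2 *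
        integral {p..q} (\<lambda>s. kernel_I \<beta> p q s * (T\<^sub>2 - s) powr (- (\<alpha> + 1)))
      < \<alpha> / Gamma (1 - \<alpha>) / (tau t k)^2 *
        integral {p..q} (\<lambda>s. kernel_I \<beta> p q s * (T\<^sub>1 - s) powr (- (\<alpha> + 1)))"
    using weight_prefactor_pos[of k] assms by (intro mult_strict_left_mono) auto
  then show ?thesis
    using Iint_minus_zeta_eq[of t k \<alpha> n \<beta>] Iint_minus_zeta_eq[of t k \<alpha> "n - 1" \<beta>]
      \<open>p < q\<close> \<open>q < T\<^sub>1\<close> \<open>T\<^sub>1 < T\<^sub>2\<close>
    by (simp add: p_def q_def T\<^sub>1_def T\<^sub>2_def \<beta>_def)
qed

lemma Jint_minus_zeta_decreasing:
  assumes "1 \<le> k" "k + 1 < n" "n \<le> N"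
  shows "Jint t \<alpha> n k - 3 * zeta t \<alpha> n k < Jint t \<alpha> (n - 1) k - 3 * zeta t \<alpha> (n - 1) k"
proof -
  define p q T\<^sub>1 T\<^sub>2 where "p = t (k - 1)" and "q = t k" and "T\<^sub>1 = tshift t (\<alpha>/2) (n - 1)"
    and "T\<^sub>2 = tshift t (\<alpha>/2) n"
  have "p < q" "q < T\<^sub>1" "T\<^sub>1 < T\<^sub>2"
    using assms node_less[of "k - 1" k] node_less_tshift[of k "n - 1"] tshift_less_tshift[of "n - 1" n]
    by (auto simp: p_def q_def T\<^sub>1_def T\<^sub>2_def)
  have "integral {p..q} (\<lambda>s. kernel_J p q s * (T\<^sub>2 - s) powr (- (\<alpha> + 1)))
      < integral {p..q} (\<lambda>s. kernel_J p q s * (T\<^sub>1 - s) powr (- (\<alpha> + 1)))"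
  proof (rule integral_powr_weight_strict_antimono)
    fix T
    assume "T \<in> {T\<^sub>1..T\<^sub>2}"
    then have "0 < integral {p..q} (\<lambda>s. kernel_J p q s * (T - s) powr (- (\<alpha> + 2)))"
      using \<open>p < q\<close> \<open>q < T\<^sub>1\<close> alpha_pos by (intro integral_kernel_J_pos) auto
    then show "0 < integral {p..q} (\<lambda>s. kernel_J p q s * (T - s) powr (- (\<alpha> + 1) - 1))"
      by (simp add: algebra_simps)
  qed (use \<open>q < T\<^sub>1\<close> \<open>T\<^sub>1 < T\<^sub>2\<close> alpha_pos in \<open>auto simp: kernel_J_def intro!: continuous_intros\<close>)
  then have "\<alpha> / Gamma (1 - \<alpha>) / (tau t k)^2 *
        integral {p..q} (\<lambda>s. kernel_J p q s * (T\<^sub>2 - s) powr (- (\<alpha> + 1)))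
      < \<alpha> / Gamma (1 - \<alpha>) / (tau t k)^2 *
        integral {p..q} (\<lambda>s. kernel_J p q s * (T\<^sub>1 - s) powr (- (\<alpha> + 1)))"
    using weight_prefactor_pos[of k] assms by (intro mult_strict_left_mono) auto
  then show ?thesis
    using Jint_minus_zeta_eq[of t k \<alpha> n] Jint_minus_zeta_eq[of t k \<alpha> "n - 1"]
      \<open>p < q\<close> \<open>q < T\<^sub>1\<close> \<open>T\<^sub>1 < T\<^sub>2\<close>
    by (simp add: p_def q_def T\<^sub>1_def T\<^sub>2_def)
qed

lemma ratio_zeta_less:
  assumes "2 \<le> n" "n \<le> N"
  shows "ratio t n * zeta t \<alpha> n (n - 1) < \<alpha> / (3 * (2 - \<alpha>)) * varpi1 t \<alpha> n (t (n - 1))"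
proof -
  define d where "d = tshift t (\<alpha>/2) n - t (n - 1)"
  have "0 < tau t (n - 1)" "0 < tau t n"
    using assms by (simp_all add: tau_pos)
  have "d = (1 - \<alpha>/2) * tau t n"
    by (simp add: d_def tshift_eq)
  then have "0 < d"
    using \<open>0 < tau t n\<close> alpha_less_1 by simp
  have "zeta t \<alpha> n (n - 1) < \<alpha> / Gamma (1 - \<alpha>) * tau t (n - 1) / 6 * d powr (-\<alpha> - 1)"
    using zeta_less[of t "n - 1" \<alpha> n] node_less[of "n - 1 - 1" "n - 1"] node_less_tshift[of "n - 1" n]
      assms alpha_pos alpha_less_1
    by (simp add: d_def)
  then have "ratio t n * zeta t \<alpha> n (n - 1)
      < tau t n / tau t (n - 1) * (\<alpha> / Gamma (1 - \<alpha>) * tau t (n - 1) / 6 * d powr (-\<alpha> - 1))"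
    unfolding ratio_def using \<open>0 < tau t (n - 1)\<close> \<open>0 < tau t n\<close> by (intro mult_strict_left_mono) auto
  also have "\<dots> = \<alpha> / Gamma (1 - \<alpha>) * (tau t n / d) / 6 * d powr (-\<alpha>)"
    using \<open>0 < tau t (n - 1)\<close> \<open>0 < d\<close> by (simp add: powr_diff field_simps)
  also have "\<dots> = \<alpha> / (3 * (2 - \<alpha>)) * (d powr (-\<alpha>) / Gamma (1 - \<alpha>))"
  proof -
    have tau_d: "tau t n / d = 2 / (2 - \<alpha>)"
      unfolding \<open>d = (1 - \<alpha>/2) * tau t n\<close> using \<open>0 < tau t n\<close> alpha_less_1 by (simp add: field_simps)
    have "0 < Gamma (1 - \<alpha>)" "2 - \<alpha> \<noteq> 0"
      using alpha_less_1 by (simp_all add: Gamma_real_pos)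
    then show ?thesis
      unfolding tau_d by (simp add: field_simps)
  qed
  also have "\<dots> = \<alpha> / (3 * (2 - \<alpha>)) * varpi1 t \<alpha> n (t (n - 1))"
    by (simp add: varpi1_eq d_def)
  finally show ?thesis .
qed

end

theorem lemma4p3:
  fixes \<alpha> T :: real and t :: "nat \<Rightarrow> real" and N n :: nat
  assumes "0 < \<alpha>" "\<alpha> < 1"
    and "t 0 = 0" "t N = T" "\<And>k. k < N \<Longrightarrow> t k < t (Suc k)"
    and "2 \<le> n" "n \<le> N"
  shows "(\<forall>k. 1 \<le> k \<and> k \<le> n - 1 \<longrightarrow>
            Iint t \<alpha> n k > (1 + betak t \<alpha> (k + 1)) * zeta t \<alpha> n k)
       \<and> (\<forall>k. 1 \<le> k \<and> k \<le> n - 2 \<longrightarrow>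
            Iint t \<alpha> n k - (1 + betak t \<alpha> (k + 1)) * zeta t \<alpha> n k
            < Iint t \<alpha> (n - 1) k - (1 + betak t \<alpha> (k + 1)) * zeta t \<alpha> (n - 1) k)
       \<and> (\<forall>k. 1 \<le> k \<and> k \<le> n - 1 \<longrightarrow> Jint t \<alpha> n k > 3 * zeta t \<alpha> n k)
       \<and> (\<forall>k. 1 \<le> k \<and> k \<le> n - 2 \<longrightarrow>
            Jint t \<alpha> n k - 3 * zeta t \<alpha> n k
            < Jint t \<alpha> (n - 1) k - 3 * zeta t \<alpha> (n - 1) k)
       \<and> ratio t n * zeta t \<alpha> n (n - 1)
            < \<alpha> / (3 * (2 - \<alpha>)) * varpi1 t \<alpha> n (t (n - 1))"
proof -
  interpret fractional_mesh t N \<alpha>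
    using assms(1,2,5) by unfold_locales
  show ?thesis
    using assms(6,7) Iint_gt_betak_zeta Iint_minus_betak_zeta_decreasing Jint_gt_zeta
      Jint_minus_zeta_decreasing ratio_zeta_less
    by auto
qed

end
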